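(* Let $E$ be an arbitrary directed graph satisfying Condition (L), and let $(H,S)$ be a reflexive admissible pair of $E$. Then the quotient graph $E/(H,S)$ satisfies Condition (L).
   Context: A path is a vertex or a finite sequence of edges $e_1\dots e_n$ with $\mathbf{r}(e_i)=\mathbf{s}(e_{i+1})$; $p^0$ is its vertex set. A cycle is a closed path ($\mathbf{s}(p)=\mathbf{r}(p)$) of positive length whose edges have distinct sources; it has an exit if some vertex of it emits an edge not on the cycle. Condition (L): every cycle has an exit. Write $u\ge v$ if there is a path from $u$ to $v$; $R(V)=\{u\mid u\ge v$ for some $v\in V\}$. $H\subseteq E^0$ is hereditary if closed under following paths, saturated if every vertex emitting a nonzero finite number of edges all with ranges in $H$ lies in $H$. $B_H=\{v\in E^0-H\mid v$ emits infinitely many edges and $\mathbf{s}^{-1}(v)\cap\mathbf{r}^{-1}(E^0-H)$ is nonempty and finite$\}$. Admissible pair: $(H,S)$, $H$ hereditary saturated, $S\subseteq B_H$. $H^\bot=E^0-R(H)$, $S^\bot=B_{H^\bot}-S$, $H^{\bot\bot}=E^0-R(H^\bot)$, $S^{\bot\bot}=B_{H^{\bot\bot}}-S^\bot$; $(H,S)$ is reflexive if $(H,S)=(H^{\bot\bot},S^{\bot\bot})$. The quotient graph $E/(H,S)$ has vertices $(E^0-H)\cup\{v'\mid v\in B_H-S\}$ and edges $\{e\in E^1\mid\mathbf{r}(e)\notin H\}\cup\{e'\mid e\in E^1,\ \mathbf{r}(e)\in B_H-S\}$, with $\mathbf{s},\mathbf{r}$ as in $E$ on edges of $E$, and $\mathbf{s}(e')=\mathbf{s}(e)$,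 $\mathbf{r}(e')=\mathbf{r}(e)'$. *)

theory Defs
  imports Main
begin

definition graph :: "'v set \<Rightarrow> 'e set \<Rightarrow> ('e \<Rightarrow> 'v) \<Rightarrow> ('e \<Rightarrow> 'v) \<Rightarrow> bool" where
  "graph V Ed s r \<longleftrightarrow> (\<forall>e\<in>Ed. s e \<in> V \<and> r e \<in> V)"

definition epath :: "'e set \<Rightarrow> ('e \<Rightarrow> 'v) \<Rightarrow> ('e \<Rightarrow> 'v) \<Rightarrow> 'e list \<Rightarrow> bool" where
  "epath Ed s r p \<longleftrightarrow> p \<noteq> [] \<and> set p \<subseteq> Ed \<and>
     (\<forall>i. Suc i < length p \<longrightarrow> r (p ! i) = s (p ! Suc i))"

definition cycle :: "'e set \<Rightarrow> ('e \<Rightarrow> 'v) \<Rightarrow> ('e \<Rightarrow> 'v) \<Rightarrow> 'e list \<Rightarrow> bool" where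
  "cycle Ed s r p \<longleftrightarrow> epath Ed s r p \<and> s (hd p) = r (last p) \<and> distinct (map s p)"

definition pverts :: "('e \<Rightarrow> 'v) \<Rightarrow> ('e \<Rightarrow> 'v) \<Rightarrow> 'e list \<Rightarrow> 'v set" where
  "pverts s r p = s ` set p \<union> r ` set p"

definition has_exit :: "'e set \<Rightarrow> ('e \<Rightarrow> 'v) \<Rightarrow> ('e \<Rightarrow> 'v) \<Rightarrow> 'e list \<Rightarrow> bool" where
  "has_exit Ed s r p \<longleftrightarrow> (\<exists>v\<in>pverts s r p. \<exists>f\<in>Ed. s f = v \<and> f \<notin> set p)"

definition condition_L :: "'v set \<Rightarrow> 'e set \<Rightarrow> ('e \<Rightarrow> 'v) \<Rightarrow> ('e \<Rightarrow> 'v) \<Rightarrow> bool" where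
  "condition_L V Ed s r \<longleftrightarrow> (\<forall>p. cycle Ed s r p \<longrightarrow> has_exit Ed s r p)"

definition geq :: "'v set \<Rightarrow> 'e set \<Rightarrow> ('e \<Rightarrow> 'v) \<Rightarrow> ('e \<Rightarrow> 'v) \<Rightarrow> 'v \<Rightarrow> 'v \<Rightarrow> bool" where
  "geq V Ed s r u v \<longleftrightarrow> (u = v \<and> u \<in> V) \<or>
     (\<exists>p. epath Ed s r p \<and> s (hd p) = u \<and> r (last p) = v)"

definition Rset :: "'v set \<Rightarrow> 'e set \<Rightarrow> ('e \<Rightarrow> 'v) \<Rightarrow> ('e \<Rightarrow> 'v) \<Rightarrow> 'v set \<Rightarrow> 'v set" where
  "Rset V Ed s r W = {u \<in> V. \<exists>w\<in>W. geq V Ed s r u w}"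

definition hereditary :: "'v set \<Rightarrow> 'e set \<Rightarrow> ('e \<Rightarrow> 'v) \<Rightarrow> ('e \<Rightarrow> 'v) \<Rightarrow> 'v set \<Rightarrow> bool" where
  "hereditary V Ed s r H \<longleftrightarrow> H \<subseteq> V \<and> (\<forall>u\<in>H. \<forall>w. geq V Ed s r u w \<longrightarrow> w \<in> H)"

definition emits :: "'e set \<Rightarrow> ('e \<Rightarrow> 'v) \<Rightarrow> 'v \<Rightarrow> 'e set" where
  "emits Ed s v = {e \<in> Ed. s e = v}"

definition saturated :: "'v set \<Rightarrow> 'e set \<Rightarrow> ('e \<Rightarrow> 'v) \<Rightarrow> ('e \<Rightarrow> 'v) \<Rightarrow> 'v set \<Rightarrow> bool" where
  "saturated V Ed s r H \<longleftrightarrow> (\<forall>v\<in>V. finite (emits Ed s v) \<and> emits Ed s v \<noteq> {} \<and>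
      r ` emits Ed s v \<subseteq> H \<longrightarrow> v \<in> H)"

definition breaking :: "'v set \<Rightarrow> 'e set \<Rightarrow> ('e \<Rightarrow> 'v) \<Rightarrow> ('e \<Rightarrow> 'v) \<Rightarrow> 'v set \<Rightarrow> 'v set" where
  "breaking V Ed s r H = {v \<in> V - H. infinite (emits Ed s v) \<and>
      {e \<in> emits Ed s v. r e \<in> V - H} \<noteq> {} \<and> finite {e \<in> emits Ed s v. r e \<in> V - H}}"

definition admissible :: "'v set \<Rightarrow> 'e set \<Rightarrow> ('e \<Rightarrow> 'v) \<Rightarrow> ('e \<Rightarrow> 'v) \<Rightarrow> 'v set \<Rightarrow> 'v set \<Rightarrow> bool" where
  "admissible V Ed s r H S \<longleftrightarrow> hereditary V Ed s r H \<and> saturated V Ed s r H \<and>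
      S \<subseteq> breaking V Ed s r H"

definition Hperp :: "'v set \<Rightarrow> 'e set \<Rightarrow> ('e \<Rightarrow> 'v) \<Rightarrow> ('e \<Rightarrow> 'v) \<Rightarrow> 'v set \<Rightarrow> 'v set" where
  "Hperp V Ed s r H = V - Rset V Ed s r H"

definition reflexive_pair :: "'v set \<Rightarrow> 'e set \<Rightarrow> ('e \<Rightarrow> 'v) \<Rightarrow> ('e \<Rightarrow> 'v) \<Rightarrow> 'v set \<Rightarrow> 'v set \<Rightarrow> bool" where
  "reflexive_pair V Ed s r H S \<longleftrightarrow>
     (let H1 = Hperp V Ed s r H; S1 = breaking V Ed s r H1 - S;
          H2 = Hperp V Ed s r H1; S2 = breaking V Ed s r H2 - S1
      in H = H2 \<and> S = S2)"

text \<open>Quotient graph E/(H,S): vertex v is Inl v, v' is Inr v; edge e is Inl e, e' is Inr e.\<close>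
definition quot_V :: "'v set \<Rightarrow> 'e set \<Rightarrow> ('e \<Rightarrow> 'v) \<Rightarrow> ('e \<Rightarrow> 'v) \<Rightarrow> 'v set \<Rightarrow> 'v set \<Rightarrow> ('v + 'v) set" where
  "quot_V V Ed s r H S = Inl ` (V - H) \<union> Inr ` (breaking V Ed s r H - S)"

definition quot_E :: "'v set \<Rightarrow> 'e set \<Rightarrow> ('e \<Rightarrow> 'v) \<Rightarrow> ('e \<Rightarrow> 'v) \<Rightarrow> 'v set \<Rightarrow> 'v set \<Rightarrow> ('e + 'e) set" where
  "quot_E V Ed s r H S = Inl ` {e \<in> Ed. r e \<notin> H} \<union> Inr ` {e \<in> Ed. r e \<in> breaking V Ed s r H - S}"

definition quot_s :: "('e \<Rightarrow> 'v) \<Rightarrow> ('e + 'e) \<Rightarrow> ('v + 'v)" where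
  "quot_s s x = (case x of Inl e \<Rightarrow> Inl (s e) | Inr e \<Rightarrow> Inl (s e))"

definition quot_r :: "('e \<Rightarrow> 'v) \<Rightarrow> ('e + 'e) \<Rightarrow> ('v + 'v)" where
  "quot_r r x = (case x of Inl e \<Rightarrow> Inl (r e) | Inr e \<Rightarrow> Inr (r e))"

end

theory Submission imports Defs begin

text \<open>On a cycle every range is again a source, and in \<open>E/(H,S)\<close> all sources are unprimed
  vertices; so a cycle of the quotient is a cycle of \<open>E\<close> avoiding \<open>H\<close>, and by (L) it has an
  exit in \<open>E\<close>. If every exit ended in \<open>H\<close>, everything reachable from the cycle would lie on
  it or in \<open>H\<close>, and all of that reaches \<open>H\<close>; so the cycle would miss \<open>R(H\<^sup>\<bottom>)\<close>, i.e. lie in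
  \<open>H\<^sup>\<bottom>\<^sup>\<bottom> = H\<close>, which it avoids. Hence some exit ends outside \<open>H\<close> and survives in the quotient.\<close>

definition edge_rel :: "'e set \<Rightarrow> ('e \<Rightarrow> 'v) \<Rightarrow> ('e \<Rightarrow> 'v) \<Rightarrow> ('v \<times> 'v) set" where
  "edge_rel Ed s r = {(s e, r e) | e. e \<in> Ed}"

lemma edge_relI: "e \<in> Ed \<Longrightarrow> (s e, r e) \<in> edge_rel Ed s r"
  unfolding edge_rel_def by blast

lemma epath_Cons_iff:
  "epath Ed s r (e # p) \<longleftrightarrow> e \<in> Ed \<and> (p = [] \<or> r e = s (hd p) \<and> epath Ed s r p)"
  unfolding epath_def by (cases p) (auto simp: nth_Cons split: nat.splits)

lemma epath_reach:
  assumes "epath Ed s r p" and "x \<in> pverts s r p"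
  shows "(s (hd p), x) \<in> (edge_rel Ed s r)\<^sup>* \<and> (x, r (last p)) \<in> (edge_rel Ed s r)\<^sup>*"
  using assms
proof (induction p arbitrary: x)
  case Nil
  then show ?case by (simp add: epath_def)
next
  case (Cons e p)
  have e: "(s e, r e) \<in> edge_rel Ed s r"
    using Cons.prems(1) by (simp add: epath_Cons_iff edge_relI)
  show ?case
  proof (cases "p = []")
    case True
    with Cons.prems(2) e show ?thesis by (auto simp: pverts_def)
  next
    case False
    with Cons.prems(1) have p: "epath Ed s r p" and re: "r e = s (hd p)"
      by (simp_all add: epath_Cons_iff)
    have hd_p: "s (hd p) \<in> pverts s r p"
      using False by (simp add: pverts_def)
    have "x = s e \<or> x = r e \<or> x \<in> pverts s r p"
      using Cons.prems(2) by (auto simp: pverts_def)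
    with Cons.IH[OF p] Cons.IH[OF p hd_p] e re False show ?thesis
      by (auto intro: converse_rtrancl_into_rtrancl)
  qed
qed

lemma closed_epath_strongly_connected:
  assumes "epath Ed s r p" and "s (hd p) = r (last p)"
    and "x \<in> pverts s r p" and "y \<in> pverts s r p"
  shows "(x, y) \<in> (edge_rel Ed s r)\<^sup>*"
  using epath_reach[OF assms(1,3)] epath_reach[OF assms(1,4)] assms(2) by auto

lemma epath_ranges: "epath Ed s r p \<Longrightarrow> r ` set p \<subseteq> s ` set p \<union> {r (last p)}"
proof (induction p)
  case Nil
  then show ?case by simp
next
  case (Cons e p)
  then show ?case by (cases "p = []") (auto simp: epath_Cons_iff)
qed

lemma geq_imp_rtrancl:
  assumes "graph V Ed s r" and "geq V Ed s r u v"
  shows "u \<in> V \<and> (u, v) \<in> (edge_rel Ed s r)\<^sup>*"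
proof -
  consider "u = v" "u \<in> V" | p where "epath Ed s r p" "s (hd p) = u" "r (last p) = v"
    using assms(2) unfolding geq_def by blast
  then show ?thesis
  proof cases
    case (2 p)
    have "u \<in> V"
      using 2 assms(1) by (cases p) (auto simp: graph_def epath_def)
    moreover have "r (last p) \<in> pverts s r p"
      using 2 by (cases p) (auto simp: pverts_def epath_def)
    ultimately show ?thesis
      using 2 epath_reach by metis
  qed simp
qed

lemma rtrancl_imp_geq:
  assumes "graph V Ed s r" and "(u, v) \<in> (edge_rel Ed s r)\<^sup>*" and "u \<in> V"
  shows "geq V Ed s r u v"
  using assms(2,3)
proof (induction rule: converse_rtrancl_induct)
  case base
  then show ?case by (simp add: geq_def)
next
  case (step u z)
  then obtain e where e: "e \<in> Ed" "u = s e" "z = r e"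
    unfolding edge_rel_def by blast
  with assms(1) have "geq V Ed s r z v"
    using step.IH by (simp add: graph_def)
  then consider "z = v" | p where "epath Ed s r p" "s (hd p) = z" "r (last p) = v"
    unfolding geq_def by blast
  then show ?case
  proof cases
    case 1
    with e show ?thesis
      unfolding geq_def by (intro disjI2 exI[of _ "[e]"]) (simp add: epath_Cons_iff)
  next
    case (2 p)
    then have "p \<noteq> []" by (simp add: epath_def)
    with 2 e show ?thesis
      unfolding geq_def by (intro disjI2 exI[of _ "e # p"]) (simp add: epath_Cons_iff)
  qed
qed

lemma geq_iff_rtrancl:
  assumes "graph V Ed s r"
  shows "geq V Ed s r u v \<longleftrightarrow> u \<in> V \<and> (u, v) \<in> (edge_rel Ed s r)\<^sup>*"
  using geq_imp_rtrancl[OF assms] rtrancl_imp_geq[OF assms] by blast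

lemma hereditary_rtrancl:
  assumes "graph V Ed s r" and "hereditary V Ed s r H"
    and "u \<in> H" and "(u, w) \<in> (edge_rel Ed s r)\<^sup>*"
  shows "w \<in> H"
  using assms geq_iff_rtrancl[OF assms(1)] unfolding hereditary_def by blast

lemma closed_epath_disjoint_Rset_Hperp:
  assumes graph: "graph V Ed s r" and her: "hereditary V Ed s r H"
    and p: "epath Ed s r p" and closed: "s (hd p) = r (last p)"
    and exits_in_H: "\<And>g. g \<in> Ed \<Longrightarrow> s g \<in> pverts s r p \<Longrightarrow> g \<notin> set p \<Longrightarrow> r g \<in> H"
    and f: "f \<in> Ed" "s f \<in> pverts s r p" "f \<notin> set p"
  shows "pverts s r p \<inter> Rset V Ed s r (Hperp V Ed s r H) = {}"
proof -
  let ?R = "edge_rel Ed s r" and ?C = "pverts s r p \<union> H"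
  have "?R `` ?C \<subseteq> ?C"
  proof
    fix y assume "y \<in> ?R `` ?C"
    then obtain e where e: "e \<in> Ed" "s e \<in> ?C" "y = r e"
      unfolding edge_rel_def by blast
    show "y \<in> ?C"
    proof (cases "s e \<in> H")
      case True
      then show ?thesis
        using hereditary_rtrancl[OF graph her] edge_relI[OF e(1)] e(3) by blast
    next
      case False
      with e exits_in_H show ?thesis
        by (cases "e \<in> set p") (auto simp: pverts_def)
    qed
  qed
  then have C_closed: "?R\<^sup>* `` ?C = ?C"
    by (rule Image_closed_trancl)
  have C_reaches_H: "\<exists>h\<in>H. (x, h) \<in> ?R\<^sup>*" if "x \<in> ?C" for x
  proof (cases "x \<in> H")
    case False
    with that have "(x, s f) \<in> ?R\<^sup>*"
      using closed_epath_strongly_connected[OF p closed] f(2) by blast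
    then have "(x, r f) \<in> ?R\<^sup>*"
      using edge_relI[OF f(1)] by (rule rtrancl_into_rtrancl)
    then show ?thesis
      using exits_in_H[OF f] by blast
  qed blast
  show ?thesis
  proof (intro equals0I)
    fix x assume "x \<in> pverts s r p \<inter> Rset V Ed s r (Hperp V Ed s r H)"
    then obtain w where x: "x \<in> pverts s r p" and w: "w \<in> Hperp V Ed s r H" "(x, w) \<in> ?R\<^sup>*"
      unfolding Rset_def geq_iff_rtrancl[OF graph] by blast
    then have "w \<in> ?C"
      using C_closed by blast
    with w(1) show False
      using C_reaches_H unfolding Hperp_def Rset_def geq_iff_rtrancl[OF graph] by blast
  qed
qed

lemma exit_outside_reflexive_hereditary:
  assumes graph: "graph V Ed s r" and her: "hereditary V Ed s r H"
    and refl: "H = Hperp V Ed s r (Hperp V Ed s r H)"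
    and p: "epath Ed s r p" and closed: "s (hd p) = r (last p)"
    and ranges: "\<forall>e\<in>set p. r e \<notin> H"
    and f: "f \<in> Ed" "s f \<in> pverts s r p" "f \<notin> set p"
  shows "\<exists>g\<in>Ed. s g \<in> pverts s r p \<and> g \<notin> set p \<and> r g \<notin> H"
proof (rule ccontr)
  assume "\<not> ?thesis"
  then have "pverts s r p \<inter> Rset V Ed s r (Hperp V Ed s r H) = {}"
    using closed_epath_disjoint_Rset_Hperp[OF graph her p closed _ f] by blast
  moreover have "s f \<in> V"
    using graph f(1) by (simp add: graph_def)
  ultimately have "s f \<in> H"
    using f(2) refl unfolding Hperp_def[of V Ed s r "Hperp V Ed s r H"] by blast
  moreover have "p \<noteq> []"
    using p by (simp add: epath_def)
  then have "(s f, r (hd p)) \<in> (edge_rel Ed s r)\<^sup>*"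
    using closed_epath_strongly_connected[OF p closed f(2)] by (simp add: pverts_def)
  ultimately have "r (hd p) \<in> H"
    using hereditary_rtrancl[OF graph her] by blast
  with ranges \<open>p \<noteq> []\<close> show False by simp
qed

lemma quot_s_simps [simp]: "quot_s s (Inl e) = Inl (s e)" "quot_s s (Inr e) = Inl (s e)"
  by (simp_all add: quot_s_def)

lemma quot_r_simps [simp]: "quot_r r (Inl e) = Inl (r e)" "quot_r r (Inr e) = Inr (r e)"
  by (simp_all add: quot_r_def)

lemma quot_pverts_map_Inl:
  "pverts (quot_s s) (quot_r r) (map Inl p) = Inl ` pverts s r p"
  by (simp add: pverts_def image_Un image_image)

lemma quot_epath_map_Inl:
  "epath (quot_E V Ed s r H S) (quot_s s) (quot_r r) (map Inl p) \<longleftrightarrow>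
     epath Ed s r p \<and> (\<forall>e\<in>set p. r e \<notin> H)"
  unfolding epath_def quot_E_def by auto

lemma quot_cycle_map_Inl:
  "cycle (quot_E V Ed s r H S) (quot_s s) (quot_r r) (map Inl p) \<longleftrightarrow>
     cycle Ed s r p \<and> (\<forall>e\<in>set p. r e \<notin> H)"
  unfolding cycle_def quot_epath_map_Inl
  by (auto simp: epath_def hd_map last_map distinct_map inj_on_def)

lemma quot_cycle_lift:
  assumes "cycle (quot_E V Ed s r H S) (quot_s s) (quot_r r) P"
  obtains p where "P = map Inl p" and "cycle Ed s r p" and "\<forall>e\<in>set p. r e \<notin> H"
proof -
  have P: "epath (quot_E V Ed s r H S) (quot_s s) (quot_r r) P"
    and closed: "quot_s s (hd P) = quot_r r (last P)"
    using assms by (simp_all add: cycle_def)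
  have "P \<noteq> []"
    using P by (simp add: epath_def)
  then have "quot_s s (hd P) \<in> quot_s s ` set P"
    by simp
  then have "quot_r r (last P) \<in> quot_s s ` set P"
    using closed by simp
  then have "quot_r r ` set P \<subseteq> quot_s s ` set P"
    using epath_ranges[OF P] by (simp add: insert_absorb)
  then have "x \<in> range Inl" if "x \<in> set P" for x
    using that by (cases x) (auto simp: quot_s_def split: sum.splits)
  then obtain p where "P = map Inl p"
    using ex_map_conv[of P Inl] by blast
  with assms that show ?thesis
    by (simp add: quot_cycle_map_Inl)
qed

lemma quot_has_exit_map_Inl:
  assumes "g \<in> Ed" "s g \<in> pverts s r p" "g \<notin> set p" "r g \<notin> H"
  shows "has_exit (quot_E V Ed s r H S) (quot_s s) (quot_r r) (map Inl p)"
  unfolding has_exit_def quot_pverts_map_Inl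
  using assms by (intro bexI[of _ "Inl (s g)"] bexI[of _ "Inl g"]) (auto simp: quot_E_def)

theorem proposition3p11:
  fixes V :: "'v set" and Ed :: "'e set" and s r :: "'e \<Rightarrow> 'v" and H S :: "'v set"
  assumes "graph V Ed s r"
    and "condition_L V Ed s r"
    and "admissible V Ed s r H S"
    and "reflexive_pair V Ed s r H S"
  shows "condition_L (quot_V V Ed s r H S) (quot_E V Ed s r H S) (quot_s s) (quot_r r)"
  unfolding condition_L_def
proof (intro allI impI)
  fix P assume "cycle (quot_E V Ed s r H S) (quot_s s) (quot_r r) P"
  then obtain p where P: "P = map Inl p" and p: "cycle Ed s r p" and ranges: "\<forall>e\<in>set p. r e \<notin> H"
    by (rule quot_cycle_lift)
  obtain f where f: "f \<in> Ed" "s f \<in> pverts s r p" "f \<notin> set p"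
    using assms(2) p unfolding condition_L_def has_exit_def by blast
  have her: "hereditary V Ed s r H"
    using assms(3) by (simp add: admissible_def)
  have refl: "H = Hperp V Ed s r (Hperp V Ed s r H)"
    using assms(4) by (simp add: reflexive_pair_def Let_def)
  obtain g where "g \<in> Ed" "s g \<in> pverts s r p" "g \<notin> set p" "r g \<notin> H"
    using exit_outside_reflexive_hereditary[OF assms(1) her refl _ _ ranges f] p
    unfolding cycle_def by blast
  then show "has_exit (quot_E V Ed s r H S) (quot_s s) (quot_r r) P"
    unfolding P by (rule quot_has_exit_map_Inl)
qed

end
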